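(* Let $K$ be a kernel as below, $\mathbf{n}\in\mathbb{N}^d$, and suppose $\rho_{\mathbf{j}}(\mathbf{0})\ne0$ for all $\mathbf{j}\in\Omega_{\mathbf{n}}^*$. Then for every function $f:\mathbb{T}^d\to\mathbb{R}$ there is a unique sk-spline $s\in SK(\Lambda_{\mathbf{n}})$ satisfying $s(\mathbf{x}_{\mathbf{j}})=f(\mathbf{x}_{\mathbf{j}})$ for all $\mathbf{j}\in\Omega_{\mathbf{n}}$, and it is given by $$s(\mathbf{x})=sk_{\mathbf{n}}(f,\mathbf{x})=\sum_{\mathbf{k}\in\Omega_{\mathbf{n}}}f(\mathbf{x}_{\mathbf{k}})\,\widetilde{sk}_{\mathbf{n}}(\mathbf{x}-\mathbf{x}_{\mathbf{k}}),\qquad\mathbf{x}\in\mathbb{T}^d.$$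
   Context: $\mathbb{T}^d=(\mathbb{R}/2\pi\mathbb{Z})^d$. Kernel: $K(\mathbf{x})=\sum_{\mathbf{l}\in\mathbb{Z}^d}a_{\mathbf{l}}e^{i\mathbf{l}\cdot\mathbf{x}}$ with $(a_{\mathbf{l}})$ real, $a_{\mathbf{l}}=a_{-\mathbf{l}}$, $\sum_{\mathbf{l}}|a_{\mathbf{l}}|<\infty$. Notation: $\mathbf{x}\cdot\mathbf{y}=\sum_ix_iy_i$; fix $\mathbf{n}\in\mathbb{N}^d$, $\mathbf{x}_{\mathbf{k}}=(\pi k_1/n_1,\dots,\pi k_d/n_d)$ for $\mathbf{k}\in\mathbb{Z}^d$, $\Omega_{\mathbf{n}}=\{\mathbf{j}\in\mathbb{Z}^d:0\le j_l\le 2n_l-1\}$, $\Omega_{\mathbf{n}}^*=\Omega_{\mathbf{n}}\setminus\{\mathbf{0}\}$, $\Lambda_{\mathbf{n}}=\{\mathbf{x}_{\mathbf{k}}:\mathbf{k}\in\Omega_{\mathbf{n}}\}$, $N=2^dn_1\cdots n_d$. For $\mathbf{j}\in\mathbb{Z}^d$: $\rho_{\mathbf{j}}(\mathbf{x})=\frac{2}{N}\sum_{\mathbf{k}\in\Omega_{\mathbf{n}}}\cos(\mathbf{j}\cdot\mathbf{x}_{\mathbf{k}})K(\mathbf{x}-\mathbf{x}_{\mathbf{k}})$. An sk-spline on $\Lambda_{\mathbf{n}}$ (associated with $K$) is a function $s(\mathbf{x})=c+\sum_{\mathbf{k}\in\Omega_{\mathbf{n}}}c_{\mathbf{k}}K(\mathbf{x}-\mathbf{x}_{\mathbf{k}})$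 with $c,c_{\mathbf{k}}\in\mathbb{R}$ and $\sum_{\mathbf{k}\in\Omega_{\mathbf{n}}}c_{\mathbf{k}}=0$; $SK(\Lambda_{\mathbf{n}})$ is the real vector space of these. The fundamental sk-spline is $\widetilde{sk}_{\mathbf{n}}(\mathbf{x})=\frac1N+\frac1N\sum_{\mathbf{j}\in\Omega_{\mathbf{n}}^*}\frac{\rho_{\mathbf{j}}(\mathbf{x})}{\rho_{\mathbf{j}}(\mathbf{0})}$. *)

theory Defs
  imports "HOL-Analysis.Analysis"
begin

text \<open>Dimension d is the cardinality of the finite index type 'd.
  Points of the torus are represented by their representatives in real^'d.\<close>

definition idot :: "int^'d::finite \<Rightarrow> real^'d \<Rightarrow> real" where
  "idot l x = (\<Sum>i\<in>UNIV. real_of_int (l$i) * x$i)"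

definition kernel_coeffs :: "(int^'d::finite \<Rightarrow> real) \<Rightarrow> bool" where
  "kernel_coeffs a \<longleftrightarrow> (\<forall>l. a l = a (-l)) \<and> (\<lambda>l. \<bar>a l\<bar>) summable_on UNIV"

text \<open>The kernel K(x) = sum_l a_l e^{i l.x}; it is real-valued for admissible a,
  so we take its real part to view it as a real function.\<close>
definition kernelC :: "(int^'d::finite \<Rightarrow> real) \<Rightarrow> real^'d \<Rightarrow> complex" where
  "kernelC a x = (\<Sum>\<^sub>\<infinity>l. complex_of_real (a l) * exp (\<i> * complex_of_real (idot l x)))"

definition kernel :: "(int^'d::finite \<Rightarrow> real) \<Rightarrow> real^'d \<Rightarrow> real" where
  "kernel a x = Re (kernelC a x)"

definition grid_pt :: "nat^'d::finite \<Rightarrow> int^'d \<Rightarrow> real^'d" where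
  "grid_pt n k = (\<chi> i. pi * real_of_int (k$i) / real (n$i))"

definition Omega :: "nat^'d::finite \<Rightarrow> (int^'d) set" where
  "Omega n = {j. \<forall>i. 0 \<le> j$i \<and> j$i \<le> 2 * int (n$i) - 1}"

definition Omega_star :: "nat^'d::finite \<Rightarrow> (int^'d) set" where
  "Omega_star n = Omega n - {0}"

definition Ncard :: "nat^'d::finite \<Rightarrow> real" where
  "Ncard n = 2 ^ CARD('d) * (\<Prod>i\<in>UNIV. real (n$i))"

definition rho :: "(int^'d::finite \<Rightarrow> real) \<Rightarrow> nat^'d \<Rightarrow> int^'d \<Rightarrow> real^'d \<Rightarrow> real" where
  "rho a n j x = 2 / Ncard n *
     (\<Sum>k\<in>Omega n. cos (idot j (grid_pt n k)) * kernel a (x - grid_pt n k))"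

definition SK :: "(int^'d::finite \<Rightarrow> real) \<Rightarrow> nat^'d \<Rightarrow> (real^'d \<Rightarrow> real) set" where
  "SK a n = {s. \<exists>c ck. (\<Sum>k\<in>Omega n. ck k) = 0 \<and>
      s = (\<lambda>x. c + (\<Sum>k\<in>Omega n. ck k * kernel a (x - grid_pt n k)))}"

definition sk_fund :: "(int^'d::finite \<Rightarrow> real) \<Rightarrow> nat^'d \<Rightarrow> real^'d \<Rightarrow> real" where
  "sk_fund a n x = 1 / Ncard n +
     1 / Ncard n * (\<Sum>j\<in>Omega_star n. rho a n j x / rho a n j 0)"

definition sk_interp :: "(int^'d::finite \<Rightarrow> real) \<Rightarrow> nat^'d \<Rightarrow> (real^'d \<Rightarrow> real) \<Rightarrow> real^'d \<Rightarrow> real" where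
  "sk_interp a n f x = (\<Sum>k\<in>Omega n. f (grid_pt n k) * sk_fund a n (x - grid_pt n k))"

definition torus_periodic :: "(real^'d::finite \<Rightarrow> real) \<Rightarrow> bool" where
  "torus_periodic f \<longleftrightarrow> (\<forall>x i. f (x + (\<chi> l. if l = i then 2 * pi else 0)) = f x)"

end

theory Submission
  imports Defs
begin

text \<open>The grid indices form the group \<open>\<int>\<^sup>d / (2n)\<int>\<^sup>d\<close>, with \<open>Omega n\<close> as a system of
  representatives, and the kernel and the characters \<open>x \<mapsto> e\<^sup>i\<^sup>j\<^sup>\<cdot>\<^sup>x\<close> are \<open>2\<pi>\<close>-periodic. Hence
  grid sums of periodic functions are invariant under translations and reflections of the
  index, and the characters are orthogonal on the grid. Translation invariance turns
  \<open>\<rho>\<^sub>j(x\<^sub>p)\<close> into \<open>cos(j\<cdot>x\<^sub>p) \<rho>\<^sub>j(0)\<close>, so by orthogonality the fundamental spline is \<open>1\<close> at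
  \<open>x\<^sub>0\<close> and \<open>0\<close> at the other nodes, which gives interpolation; expanding the \<open>\<rho>\<^sub>j\<close> shows that
  its translates are sk-splines. Conversely, for \<open>j \<noteq> 0\<close> the \<open>j\<close>-th discrete Fourier coefficient
  of the grid values of an sk-spline is \<open>N \<rho>\<^sub>j(0)/2\<close> times that of its coefficient vector. If the
  spline vanishes on the grid, all Fourier coefficients of its coefficient vector vanish (the
  \<open>0\<close>-th by the side condition \<open>\<Sum> c\<^sub>k = 0\<close>), and Fourier inversion kills the coefficients.\<close>

definition index_mod :: "nat^'d::finite \<Rightarrow> int^'d \<Rightarrow> int^'d" where
  "index_mod n k = (\<chi> i. k$i mod (2 * int (n$i)))"

definition lattice_vec :: "('d::finite \<Rightarrow> int) \<Rightarrow> real^'d" where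
  "lattice_vec m = (\<chi> i. 2 * pi * of_int (m i))"

definition periodic_2pi :: "(real^'d::finite \<Rightarrow> 'b) \<Rightarrow> bool" where
  "periodic_2pi F \<longleftrightarrow> (\<forall>x m. F (x + lattice_vec m) = F x)"

lemma Omega_iff: "k \<in> Omega n \<longleftrightarrow> (\<forall>i. 0 \<le> k$i \<and> k$i < 2 * int (n$i))"
  unfolding Omega_def by auto

lemma Omega_eq_image_PiE:
  fixes n :: "nat^'d::finite"
  shows "Omega n = vec_lambda ` (PiE UNIV (\<lambda>i. {0..2 * int (n$i) - 1}))"
proof (rule set_eqI)
  fix k :: "int^'d"
  show "k \<in> Omega n \<longleftrightarrow> k \<in> vec_lambda ` (PiE UNIV (\<lambda>i. {0..2 * int (n$i) - 1}))"
  proof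
    assume "k \<in> Omega n"
    then have "vec_nth k \<in> PiE UNIV (\<lambda>i. {0..2 * int (n$i) - 1})"
      unfolding Omega_def by auto
    then show "k \<in> vec_lambda ` (PiE UNIV (\<lambda>i. {0..2 * int (n$i) - 1}))"
      by (rule rev_image_eqI) simp
  qed (auto simp: Omega_def)
qed

lemma finite_Omega [simp]: "finite (Omega n)"
  unfolding Omega_eq_image_PiE by (intro finite_imageI finite_PiE) auto

lemma card_Omega:
  fixes n :: "nat^'d::finite"
  shows "real (card (Omega n)) = Ncard n"
proof -
  have "inj_on vec_lambda (PiE UNIV (\<lambda>i. {0..2 * int (n$i) - 1}) :: ('d \<Rightarrow> int) set)"
    by (intro inj_onI) (simp add: vec_lambda_inject)
  then have "card (Omega n) = (\<Prod>i\<in>UNIV. card {0..2 * int (n$i) - 1})"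
    unfolding Omega_eq_image_PiE by (simp add: card_image card_PiE)
  also have "\<dots> = (\<Prod>i\<in>UNIV. 2 * n$i)"
    by (intro prod.cong) auto
  finally show ?thesis
    unfolding Ncard_def by (simp add: prod.distrib)
qed

lemma index_mod_eq_iff: "index_mod n x = index_mod n y \<longleftrightarrow> index_mod n (x - y) = 0"
  unfolding index_mod_def vec_eq_iff by (simp add: mod_eq_dvd_iff mod_eq_0_iff_dvd)

lemma index_mod_Omega: "k \<in> Omega n \<Longrightarrow> index_mod n k = k"
  unfolding Omega_iff index_mod_def by (simp add: vec_eq_iff)

lemma index_mod_diff_eq_0_iff:
  "q \<in> Omega n \<Longrightarrow> k \<in> Omega n \<Longrightarrow> index_mod n (q - k) = 0 \<longleftrightarrow> q = k"
  by (simp add: index_mod_eq_iff[symmetric] index_mod_Omega)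

lemma grid_add: "grid_pt n (k + t) = grid_pt n k + grid_pt n t"
  unfolding grid_pt_def by (simp add: vec_eq_iff add_divide_distrib distrib_left)

lemma grid_diff: "grid_pt n (k - t) = grid_pt n k - grid_pt n t"
  unfolding grid_pt_def by (simp add: vec_eq_iff diff_divide_distrib right_diff_distrib)

lemma grid_zero [simp]: "grid_pt n 0 = 0"
  unfolding grid_pt_def by (simp add: vec_eq_iff)

lemma idot_add: "idot j (x + y) = idot j x + idot j y"
  unfolding idot_def by (simp add: distrib_left sum.distrib)

lemma idot_diff: "idot j (x - y) = idot j x - idot j y"
  unfolding idot_def by (simp add: right_diff_distrib sum_subtractf)

lemma idot_uminus: "idot j (- x) = - idot j x"
  unfolding idot_def by (simp add: sum_negf)

lemma idot_uminus_left: "idot (- l) x = - idot l x"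
  unfolding idot_def by (simp add: sum_negf)

lemma idot_zero [simp]: "idot 0 x = 0" "idot j 0 = 0"
  unfolding idot_def by simp_all

lemma idot_lattice_vec: "idot j (lattice_vec m) = 2 * pi * of_int (\<Sum>i\<in>UNIV. j$i * m i)"
  unfolding idot_def lattice_vec_def by (simp add: sum_distrib_left algebra_simps)

lemma idot_grid_commute: "idot j (grid_pt n k) = idot k (grid_pt n j)"
  unfolding idot_def grid_pt_def by (intro sum.cong) auto

lemma periodic_2pi_mult:
  fixes F G :: "real^'d::finite \<Rightarrow> 'b::times"
  shows "periodic_2pi F \<Longrightarrow> periodic_2pi G \<Longrightarrow> periodic_2pi (\<lambda>x. F x * G x)"
  unfolding periodic_2pi_def by simp

lemma periodic_2pi_reflect:
  assumes "periodic_2pi F" shows "periodic_2pi (\<lambda>x. F (y - x))"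
proof -
  have "F (y - (x + lattice_vec m)) = F (y - x)" for x m
  proof -
    have "y - (x + lattice_vec m) = (y - x) + lattice_vec (\<lambda>i. - m i)"
      by (simp add: lattice_vec_def vec_eq_iff)
    then show ?thesis using assms unfolding periodic_2pi_def by presburger
  qed
  then show ?thesis unfolding periodic_2pi_def by blast
qed

lemma periodic_2pi_translate:
  assumes "periodic_2pi F" shows "periodic_2pi (\<lambda>x. F (x - y))"
  using assms unfolding periodic_2pi_def by (simp add: diff_add_eq[symmetric])

lemma periodic_2pi_idot:
  assumes "\<And>t z. G (t + 2 * pi * of_int z) = G t"
  shows "periodic_2pi (\<lambda>x. G (idot j x))"
  unfolding periodic_2pi_def idot_add idot_lattice_vec assms by simp

lemma cis_2pi_shift: "cis (t + 2 * pi * of_int z) = cis t"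
  by (simp add: complex_eq_iff cos_add sin_add)

lemma cos_2pi_shift: "cos (t + 2 * pi * of_int z) = cos t"
  by (simp add: cos_add)

lemma sin_2pi_shift: "sin (t + 2 * pi * of_int z) = sin t"
  by (simp add: sin_add)

lemmas periodic_2pi_cis_idot = periodic_2pi_idot[of cis, OF cis_2pi_shift]
lemmas periodic_2pi_cos_idot = periodic_2pi_idot[of cos, OF cos_2pi_shift]
lemmas periodic_2pi_sin_idot = periodic_2pi_idot[of sin, OF sin_2pi_shift]

lemma periodic_2pi_kernel: "periodic_2pi (kernel a)"
proof -
  have "kernelC a (x + lattice_vec m) = kernelC a x" for x m
    unfolding kernelC_def cis_conv_exp[symmetric] idot_add idot_lattice_vec cis_2pi_shift ..
  then show ?thesis unfolding periodic_2pi_def kernel_def by simp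
qed

lemma kernel_even:
  assumes "kernel_coeffs a" shows "kernel a (- x) = kernel a x"
proof -
  have even: "a (- l) = a l" for l using assms unfolding kernel_coeffs_def by metis
  let ?f = "\<lambda>l. complex_of_real (a l) * cis (idot l x)"
  have "kernelC a (- x) = infsum (\<lambda>l. ?f (- l)) UNIV"
    unfolding kernelC_def cis_conv_exp[symmetric]
    by (intro infsum_cong) (simp add: even idot_uminus idot_uminus_left)
  also have "\<dots> = infsum ?f UNIV"
    by (rule infsum_reindex_bij_betw) (simp add: bij_uminus)
  finally show ?thesis unfolding kernel_def kernelC_def cis_conv_exp[symmetric] by simp
qed

lemma SK_zero: "(\<lambda>_. 0) \<in> SK a n"
  unfolding SK_def by (rule CollectI, rule exI[of _ 0], rule exI[of _ "\<lambda>_. 0"]) simp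

lemma SK_add_scaled:
  assumes "s \<in> SK a n" "t \<in> SK a n"
  shows "(\<lambda>x. u * s x + t x) \<in> SK a n"
proof -
  obtain c ck d dk where
    "(\<Sum>k\<in>Omega n. ck k) = 0" "s = (\<lambda>x. c + (\<Sum>k\<in>Omega n. ck k * kernel a (x - grid_pt n k)))"
    "(\<Sum>k\<in>Omega n. dk k) = 0" "t = (\<lambda>x. d + (\<Sum>k\<in>Omega n. dk k * kernel a (x - grid_pt n k)))"
    using assms unfolding SK_def by blast
  then have "(\<Sum>k\<in>Omega n. u * ck k + dk k) = 0"
    and "(\<lambda>x. u * s x + t x)
      = (\<lambda>x. (u * c + d) + (\<Sum>k\<in>Omega n. (u * ck k + dk k) * kernel a (x - grid_pt n k)))"
    by (simp_all add: sum.distrib sum_distrib_left algebra_simps flip: sum_distrib_left)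
  then show ?thesis unfolding SK_def by blast
qed

lemma SK_sum:
  assumes "finite I" "\<And>i. i \<in> I \<Longrightarrow> s i \<in> SK a n"
  shows "(\<lambda>x. \<Sum>i\<in>I. w i * s i x) \<in> SK a n"
  using assms by (induction I rule: finite_induct) (simp_all add: SK_zero SK_add_scaled)

definition fund_coeff :: "(int^'d::finite \<Rightarrow> real) \<Rightarrow> nat^'d \<Rightarrow> real^'d \<Rightarrow> real" where
  "fund_coeff a n x = (\<Sum>j\<in>Omega_star n. 2 / (Ncard n ^ 2 * rho a n j 0) * cos (idot j x))"

lemma periodic_2pi_fund_coeff: "periodic_2pi (fund_coeff a n)"
  unfolding periodic_2pi_def fund_coeff_def idot_add idot_lattice_vec cos_2pi_shift by simp

context
  fixes n :: "nat^'d::finite"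
  assumes n_pos: "\<forall>i. n$i \<ge> 1"
begin

lemma Ncard_pos: "Ncard n > 0"
  unfolding Ncard_def using n_pos by (simp add: prod_pos Suc_le_eq)

lemma zero_in_Omega: "0 \<in> Omega n"
  using n_pos unfolding Omega_def by (auto simp: Suc_le_eq)

lemma index_mod_in_Omega: "index_mod n k \<in> Omega n"
  using n_pos unfolding Omega_iff index_mod_def
  by (auto intro!: pos_mod_bound pos_mod_sign simp: Suc_le_eq)

lemma grid_index_mod:
  "grid_pt n (index_mod n k) = grid_pt n k + lattice_vec (\<lambda>i. - (k$i div (2 * int (n$i))))"
proof -
  have "pi * real_of_int (k$i mod (2 * int (n$i))) / real (n$i)
      = pi * real_of_int (k$i) / real (n$i) - 2 * pi * real_of_int (k$i div (2 * int (n$i)))" for i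
  proof -
    have "real (n$i) \<noteq> 0" using n_pos by (simp add: Suc_le_eq)
    moreover have mod_eq: "real_of_int (k$i mod (2 * int (n$i)))
        = real_of_int (k$i) - 2 * real (n$i) * real_of_int (k$i div (2 * int (n$i)))"
      by (simp add: minus_div_mult_eq_mod[symmetric] algebra_simps)
    ultimately show ?thesis
      unfolding mod_eq by (simp add: diff_divide_distrib right_diff_distrib)
  qed
  then show ?thesis unfolding grid_pt_def index_mod_def lattice_vec_def by (simp add: vec_eq_iff)
qed

lemma periodic_2pi_grid_index_mod:
  "periodic_2pi F \<Longrightarrow> F (grid_pt n (index_mod n k)) = F (grid_pt n k)"
  unfolding periodic_2pi_def grid_index_mod by simp

lemma sum_Omega_reindex_mod:
  assumes per: "\<And>k. g (index_mod n k) = g k"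
    and inj: "\<And>k k'. k \<in> Omega n \<Longrightarrow> k' \<in> Omega n \<Longrightarrow>
      index_mod n (h k) = index_mod n (h k') \<Longrightarrow> k = k'"
  shows "(\<Sum>k\<in>Omega n. g (h k)) = (\<Sum>k\<in>Omega n. g k)"
proof -
  let ?r = "\<lambda>k. index_mod n (h k)"
  have "inj_on ?r (Omega n)" using inj by (auto intro: inj_onI)
  moreover have "?r ` Omega n = Omega n"
    using calculation by (intro endo_inj_surj) (auto simp: index_mod_in_Omega)
  ultimately have "bij_betw ?r (Omega n) (Omega n)" by (simp add: bij_betw_def)
  then have "(\<Sum>k\<in>Omega n. g (?r k)) = (\<Sum>k\<in>Omega n. g k)" by (rule sum.reindex_bij_betw)
  then show ?thesis using per by simp
qed

lemma sum_grid_translate: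
  assumes "periodic_2pi F"
  shows "(\<Sum>k\<in>Omega n. F (grid_pt n k + grid_pt n t)) = (\<Sum>k\<in>Omega n. F (grid_pt n k))"
proof -
  have "(\<Sum>k\<in>Omega n. F (grid_pt n (k + t))) = (\<Sum>k\<in>Omega n. F (grid_pt n k))"
  proof (rule sum_Omega_reindex_mod)
    show "k = k'" if "k \<in> Omega n" "k' \<in> Omega n" "index_mod n (k + t) = index_mod n (k' + t)"
      for k k'
      using that by (simp add: index_mod_eq_iff index_mod_diff_eq_0_iff)
  qed (rule periodic_2pi_grid_index_mod[OF assms])
  then show ?thesis by (simp add: grid_add)
qed

lemma sum_grid_reflect:
  assumes "periodic_2pi F"
  shows "(\<Sum>k\<in>Omega n. F (grid_pt n t - grid_pt n k)) = (\<Sum>k\<in>Omega n. F (grid_pt n k))"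
proof -
  have "(\<Sum>k\<in>Omega n. F (grid_pt n (t - k))) = (\<Sum>k\<in>Omega n. F (grid_pt n k))"
  proof (rule sum_Omega_reindex_mod)
    show "k = k'" if "k \<in> Omega n" "k' \<in> Omega n" "index_mod n (t - k) = index_mod n (t - k')"
      for k k'
      using that by (simp add: index_mod_eq_iff index_mod_diff_eq_0_iff)
  qed (rule periodic_2pi_grid_index_mod[OF assms])
  then show ?thesis by (simp add: grid_diff)
qed

lemma sum_cis_grid:
  "(\<Sum>j\<in>Omega n. cis (idot m (grid_pt n j))) = (if index_mod n m = 0 then of_real (Ncard n) else 0)"
proof (cases "index_mod n m = 0")
  case True
  have "cis (idot m (grid_pt n j)) = 1" for j
    using periodic_2pi_grid_index_mod[OF periodic_2pi_cis_idot, of j m] True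
    by (simp add: idot_grid_commute[of m])
  then show ?thesis using True by (simp add: card_Omega[symmetric])
next
  case False
  then obtain i where i: "m$i mod (2 * int (n$i)) \<noteq> 0"
    unfolding index_mod_def by (auto simp: vec_eq_iff)
  let ?S = "\<Sum>j\<in>Omega n. cis (idot m (grid_pt n j))"
  let ?\<theta> = "pi * real_of_int (m$i) / real (n$i)"
  \<comment> \<open>Translating the index by the \<open>i\<close>-th unit vector multiplies the sum by \<open>cis \<theta> \<noteq> 1\<close>.\<close>
  have "idot m (grid_pt n (axis i 1)) = (\<Sum>l\<in>UNIV. if l = i then ?\<theta> else 0)"
    unfolding idot_def grid_pt_def by (intro sum.cong) (auto simp: axis_def)
  then have "idot m (grid_pt n (axis i 1)) = ?\<theta>" by simp
  then have "(\<Sum>j\<in>Omega n. cis (idot m (grid_pt n j + grid_pt n (axis i 1)))) = cis ?\<theta> * ?S"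
    by (simp add: idot_add cis_mult[symmetric] sum_distrib_right mult.commute)
  moreover have "(\<Sum>j\<in>Omega n. cis (idot m (grid_pt n j + grid_pt n (axis i 1)))) = ?S"
    by (rule sum_grid_translate[OF periodic_2pi_cis_idot])
  ultimately have "cis ?\<theta> * ?S = ?S" by simp
  moreover have "cis ?\<theta> \<noteq> 1"
  proof
    assume "cis ?\<theta> = 1"
    then have "cos ?\<theta> = 1" by (metis cis.sel(1) one_complex.sel(1))
    then obtain z :: int where "?\<theta> = real_of_int z * 2 * pi"
      unfolding cos_one_2pi_int by blast
    then have "real_of_int (m$i) = real_of_int (2 * int (n$i) * z)"
      using n_pos by (simp add: field_simps Suc_le_eq)
    then have "m$i = 2 * int (n$i) * z" by linarith
    then show False using i by simp
  qed
  ultimately show ?thesis using False by (metis mult_cancel_right2)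
qed

lemma sum_cos_grid:
  "(\<Sum>j\<in>Omega n. cos (idot m (grid_pt n j))) = (if index_mod n m = 0 then Ncard n else 0)"
proof -
  have "(\<Sum>j\<in>Omega n. cos (idot m (grid_pt n j))) = Re (\<Sum>j\<in>Omega n. cis (idot m (grid_pt n j)))"
    by simp
  then show ?thesis unfolding sum_cis_grid by simp
qed

lemma sk_fund_kernel_expansion:
  "sk_fund a n x = 1 / Ncard n + (\<Sum>m\<in>Omega n. fund_coeff a n (grid_pt n m) * kernel a (x - grid_pt n m))"
proof -
  have "(\<Sum>m\<in>Omega n. fund_coeff a n (grid_pt n m) * kernel a (x - grid_pt n m))
      = (\<Sum>j\<in>Omega_star n. 2 / (Ncard n ^ 2 * rho a n j 0)
          * (\<Sum>m\<in>Omega n. cos (idot j (grid_pt n m)) * kernel a (x - grid_pt n m)))"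
    unfolding fund_coeff_def sum_distrib_right sum_distrib_left
    by (subst sum.swap) (simp add: mult.assoc)
  also have "\<dots> = (\<Sum>j\<in>Omega_star n. 1 / Ncard n * (rho a n j x / rho a n j 0))"
    using Ncard_pos by (intro sum.cong) (simp_all add: rho_def[of a n _ x] field_simps power2_eq_square)
  also have "\<dots> = 1 / Ncard n * (\<Sum>j\<in>Omega_star n. rho a n j x / rho a n j 0)"
    by (simp add: sum_distrib_left)
  finally show ?thesis unfolding sk_fund_def by simp
qed

lemma sum_fund_coeff_grid: "(\<Sum>m\<in>Omega n. fund_coeff a n (grid_pt n m - grid_pt n k)) = 0"
proof -
  have "(\<Sum>m\<in>Omega n. fund_coeff a n (grid_pt n m - grid_pt n k))
      = (\<Sum>m\<in>Omega n. fund_coeff a n (grid_pt n m + grid_pt n k - grid_pt n k))"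
    by (rule sum_grid_translate[OF periodic_2pi_translate[OF periodic_2pi_fund_coeff], symmetric])
  also have "\<dots> = (\<Sum>j\<in>Omega_star n. 2 / (Ncard n ^ 2 * rho a n j 0)
      * (\<Sum>m\<in>Omega n. cos (idot j (grid_pt n m))))"
    unfolding fund_coeff_def sum_distrib_left by (simp add: sum.swap[of _ "Omega n"])
  also have "\<dots> = 0"
    by (intro sum.neutral) (auto simp: sum_cos_grid index_mod_Omega Omega_star_def)
  finally show ?thesis .
qed

lemma sk_fund_translate_in_SK: "(\<lambda>x. sk_fund a n (x - grid_pt n k)) \<in> SK a n"
proof -
  have "sk_fund a n (x - grid_pt n k) = 1 / Ncard n
      + (\<Sum>m\<in>Omega n. fund_coeff a n (grid_pt n m - grid_pt n k) * kernel a (x - grid_pt n m))" for x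
  proof -
    let ?G = "\<lambda>y. fund_coeff a n (y - grid_pt n k) * kernel a (x - y)"
    have "(\<Sum>m\<in>Omega n. ?G (grid_pt n m + grid_pt n k)) = (\<Sum>m\<in>Omega n. ?G (grid_pt n m))"
      by (intro sum_grid_translate periodic_2pi_mult periodic_2pi_translate periodic_2pi_reflect
          periodic_2pi_fund_coeff periodic_2pi_kernel)
    then show ?thesis unfolding sk_fund_kernel_expansion by (simp add: algebra_simps)
  qed
  then show ?thesis
    unfolding SK_def using sum_fund_coeff_grid by blast
qed

lemma sk_interp_in_SK: "sk_interp a n f \<in> SK a n"
  unfolding sk_interp_def by (intro SK_sum finite_Omega sk_fund_translate_in_SK)

lemma dft_inversion:
  fixes d :: "int^'d \<Rightarrow> complex"
  assumes p: "p \<in> Omega n"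
  shows "(\<Sum>j\<in>Omega n. (\<Sum>k\<in>Omega n. d k * cis (idot j (grid_pt n k))) * cis (- idot j (grid_pt n p)))
    = of_real (Ncard n) * d p"
proof -
  have "cis (idot j (grid_pt n k)) * cis (- idot j (grid_pt n p)) = cis (idot (k - p) (grid_pt n j))"
    for j k
    by (simp add: cis_mult idot_grid_commute[of "k - p"] grid_diff idot_diff)
  then have "(\<Sum>j\<in>Omega n. (\<Sum>k\<in>Omega n. d k * cis (idot j (grid_pt n k))) * cis (- idot j (grid_pt n p)))
      = (\<Sum>j\<in>Omega n. \<Sum>k\<in>Omega n. d k * cis (idot (k - p) (grid_pt n j)))"
    by (simp add: sum_distrib_right mult.assoc)
  also have "\<dots> = (\<Sum>k\<in>Omega n. d k * (\<Sum>j\<in>Omega n. cis (idot (k - p) (grid_pt n j))))"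
    by (subst sum.swap) (simp add: sum_distrib_left)
  also have "\<dots> = (\<Sum>k\<in>Omega n. if k = p then of_real (Ncard n) * d k else 0)"
    by (intro sum.cong) (auto simp: sum_cis_grid index_mod_diff_eq_0_iff[OF _ p])
  finally show ?thesis using p by simp
qed

context
  fixes a :: "int^'d \<Rightarrow> real"
  assumes a: "kernel_coeffs a"
begin

lemma rho_zero: "rho a n j 0 = 2 / Ncard n * (\<Sum>k\<in>Omega n. cos (idot j (grid_pt n k)) * kernel a (grid_pt n k))"
  unfolding rho_def using kernel_even[OF a] by simp

lemma sum_sin_kernel_grid: "(\<Sum>k\<in>Omega n. sin (idot j (grid_pt n k)) * kernel a (grid_pt n k)) = 0"
proof -
  let ?F = "\<lambda>x. sin (idot j x) * kernel a x"
  have "(\<Sum>k\<in>Omega n. ?F (grid_pt n 0 - grid_pt n k)) = (\<Sum>k\<in>Omega n. ?F (grid_pt n k))"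
    by (intro sum_grid_reflect periodic_2pi_mult periodic_2pi_sin_idot periodic_2pi_kernel)
  then show ?thesis by (simp add: idot_uminus kernel_even[OF a] sum_negf)
qed

lemma rho_grid: "rho a n j (grid_pt n p) = cos (idot j (grid_pt n p)) * rho a n j 0"
proof -
  let ?A = "idot j (grid_pt n p)"
  let ?F = "\<lambda>x. cos (idot j (grid_pt n p - x)) * kernel a x"
  have "(\<Sum>k\<in>Omega n. cos (idot j (grid_pt n k)) * kernel a (grid_pt n p - grid_pt n k))
      = (\<Sum>k\<in>Omega n. ?F (grid_pt n p - grid_pt n k))"
    by simp
  also have "\<dots> = (\<Sum>k\<in>Omega n. ?F (grid_pt n k))"
    by (intro sum_grid_reflect periodic_2pi_mult periodic_2pi_reflect
        periodic_2pi_cos_idot periodic_2pi_kernel)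
  also have "\<dots> = cos ?A * (\<Sum>k\<in>Omega n. cos (idot j (grid_pt n k)) * kernel a (grid_pt n k))
      + sin ?A * (\<Sum>k\<in>Omega n. sin (idot j (grid_pt n k)) * kernel a (grid_pt n k))"
    by (simp add: idot_diff cos_diff sum_distrib_left sum.distrib algebra_simps)
  finally show ?thesis
    unfolding rho_zero sum_sin_kernel_grid by (simp add: rho_def)
qed

lemma sum_cis_kernel_grid:
  "(\<Sum>k\<in>Omega n. cis (idot j (grid_pt n k)) * of_real (kernel a (grid_pt n k)))
    = of_real (Ncard n / 2 * rho a n j 0)"
proof -
  have "(\<Sum>k\<in>Omega n. cis (idot j (grid_pt n k)) * of_real (kernel a (grid_pt n k)))
     = of_real (\<Sum>k\<in>Omega n. cos (idot j (grid_pt n k)) * kernel a (grid_pt n k))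
       + \<i> * of_real (\<Sum>k\<in>Omega n. sin (idot j (grid_pt n k)) * kernel a (grid_pt n k))"
    by (simp add: complex_eq_iff sum_distrib_left)
  then show ?thesis
    unfolding sum_sin_kernel_grid rho_zero using Ncard_pos by simp
qed

lemma sum_cis_kernel_grid_translate:
  "(\<Sum>q\<in>Omega n. cis (idot j (grid_pt n q)) * of_real (kernel a (grid_pt n q - grid_pt n k)))
    = cis (idot j (grid_pt n k)) * of_real (Ncard n / 2 * rho a n j 0)"
proof -
  let ?F = "\<lambda>x. cis (idot j x) * of_real (kernel a (x - grid_pt n k))"
  have "(\<Sum>q\<in>Omega n. ?F (grid_pt n q)) = (\<Sum>q\<in>Omega n. ?F (grid_pt n q + grid_pt n k))"
    by (intro sum_grid_translate[symmetric] periodic_2pi_mult periodic_2pi_cis_idot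
        periodic_2pi_translate[where F = "\<lambda>x. of_real (kernel a x)"])
      (simp add: periodic_2pi_def periodic_2pi_kernel[unfolded periodic_2pi_def])
  also have "\<dots> = cis (idot j (grid_pt n k))
      * (\<Sum>q\<in>Omega n. cis (idot j (grid_pt n q)) * of_real (kernel a (grid_pt n q)))"
    by (simp add: idot_add cis_mult[symmetric] sum_distrib_left algebra_simps)
  finally show ?thesis unfolding sum_cis_kernel_grid .
qed

lemma sum_cis_spline_grid:
  "(\<Sum>q\<in>Omega n. cis (idot j (grid_pt n q))
      * of_real (c + (\<Sum>k\<in>Omega n. d k * kernel a (grid_pt n q - grid_pt n k))))
    = of_real c * (\<Sum>q\<in>Omega n. cis (idot j (grid_pt n q)))
      + (\<Sum>k\<in>Omega n. of_real (d k) * cis (idot j (grid_pt n k))) * of_real (Ncard n / 2 * rho a n j 0)"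
proof -
  have "(\<Sum>q\<in>Omega n. cis (idot j (grid_pt n q))
        * of_real (\<Sum>k\<in>Omega n. d k * kernel a (grid_pt n q - grid_pt n k)))
      = (\<Sum>k\<in>Omega n. of_real (d k)
        * (\<Sum>q\<in>Omega n. cis (idot j (grid_pt n q)) * of_real (kernel a (grid_pt n q - grid_pt n k))))"
    unfolding of_real_sum sum_distrib_left
    by (subst sum.swap) (simp add: algebra_simps)
  then show ?thesis
    unfolding sum_cis_kernel_grid_translate
    by (simp add: distrib_left sum.distrib sum_distrib_left sum_distrib_right algebra_simps)
qed

context
  assumes rho_nonzero: "\<forall>j\<in>Omega_star n. rho a n j 0 \<noteq> 0"
begin

lemma sk_fund_grid: "sk_fund a n (grid_pt n p) = (if index_mod n p = 0 then 1 else 0)"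
proof -
  have "(\<Sum>j\<in>Omega_star n. rho a n j (grid_pt n p) / rho a n j 0)
      = (\<Sum>j\<in>Omega_star n. cos (idot j (grid_pt n p)))"
    using rho_nonzero by (intro sum.cong) (auto simp: rho_grid)
  moreover have "(\<Sum>j\<in>Omega n. cos (idot j (grid_pt n p)))
      = 1 + (\<Sum>j\<in>Omega_star n. cos (idot j (grid_pt n p)))"
    unfolding Omega_star_def by (subst sum.remove[OF finite_Omega zero_in_Omega]) simp
  ultimately show ?thesis
    unfolding sk_fund_def using sum_cos_grid[of p] Ncard_pos
    by (auto simp: idot_grid_commute[of _ n p] field_simps)
qed

lemma sk_interp_grid:
  assumes q: "q \<in> Omega n"
  shows "sk_interp a n f (grid_pt n q) = f (grid_pt n q)"
proof -
  have "sk_interp a n f (grid_pt n q) = (\<Sum>k\<in>Omega n. if k = q then f (grid_pt n k) else 0)"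
    unfolding sk_interp_def
    by (intro sum.cong) (auto simp: grid_diff[symmetric] sk_fund_grid index_mod_diff_eq_0_iff[OF q])
  then show ?thesis using q by simp
qed

lemma SK_coeffs_vanish:
  assumes d: "(\<Sum>k\<in>Omega n. d k) = 0"
    and vanish: "\<forall>q\<in>Omega n. c + (\<Sum>k\<in>Omega n. d k * kernel a (grid_pt n q - grid_pt n k)) = 0"
    and p: "p \<in> Omega n"
  shows "d p = 0"
proof -
  define D where "D j = (\<Sum>k\<in>Omega n. of_real (d k) * cis (idot j (grid_pt n k)))" for j
  have "D j = 0" if j: "j \<in> Omega n" for j
  proof (cases "j = 0")
    case True
    then show ?thesis unfolding D_def using d by (simp flip: of_real_sum)
  next
    case False
    then have "D j * of_real (Ncard n / 2 * rho a n j 0) = 0"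
      using sum_cis_spline_grid[of j c d] vanish j
      by (simp add: D_def sum_cis_grid index_mod_Omega)
    moreover have "rho a n j 0 \<noteq> 0" using rho_nonzero j False by (simp add: Omega_star_def)
    ultimately show ?thesis using Ncard_pos by simp
  qed
  then have "of_real (Ncard n) * of_real (d p) = (0 :: complex)"
    using dft_inversion[OF p, of "\<lambda>k. of_real (d k)"] by (simp add: D_def)
  then show ?thesis using Ncard_pos by simp
qed

lemma SK_vanishing_on_grid:
  assumes "s \<in> SK a n" and vanish: "\<forall>q\<in>Omega n. s (grid_pt n q) = 0"
  shows "s = (\<lambda>_. 0)"
proof -
  obtain c d where d: "(\<Sum>k\<in>Omega n. d k) = 0"
    and s: "s = (\<lambda>x. c + (\<Sum>k\<in>Omega n. d k * kernel a (x - grid_pt n k)))"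
    using assms(1) unfolding SK_def by blast
  have "d k = 0" if "k \<in> Omega n" for k
    using SK_coeffs_vanish[OF d _ that] vanish s by simp
  moreover have "s (grid_pt n 0) = 0" using vanish zero_in_Omega by blast
  ultimately show ?thesis using s by simp
qed

end

end

end

theorem theorem4p5:
  fixes a :: "int^'d::finite \<Rightarrow> real" and n :: "nat^'d" and f :: "real^'d \<Rightarrow> real"
  assumes "kernel_coeffs a"
    and "\<forall>i. n$i \<ge> 1"
    and "\<forall>j\<in>Omega_star n. rho a n j 0 \<noteq> 0"
    and "torus_periodic f"
  shows "(\<exists>!s. s \<in> SK a n \<and> (\<forall>j\<in>Omega n. s (grid_pt n j) = f (grid_pt n j)))
    \<and> sk_interp a n f \<in> SK a n
    \<and> (\<forall>j\<in>Omega n. sk_interp a n f (grid_pt n j) = f (grid_pt n j))"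
proof -
  \<comment> \<open>Only the grid values of \<open>f\<close> matter, so its periodicity is not needed.\<close>
  have in_SK: "sk_interp a n f \<in> SK a n"
    using assms(2) by (rule sk_interp_in_SK)
  have interp: "\<forall>j\<in>Omega n. sk_interp a n f (grid_pt n j) = f (grid_pt n j)"
    using sk_interp_grid[OF assms(2,1,3)] by blast
  have "s = sk_interp a n f"
    if "s \<in> SK a n" "\<forall>j\<in>Omega n. s (grid_pt n j) = f (grid_pt n j)" for s
  proof -
    have "(\<lambda>x. - 1 * sk_interp a n f x + s x) \<in> SK a n"
      using in_SK that(1) by (rule SK_add_scaled)
    moreover have "\<forall>j\<in>Omega n. - 1 * sk_interp a n f (grid_pt n j) + s (grid_pt n j) = 0"
      using interp that(2) by simp
    ultimately have "(\<lambda>x. - 1 * sk_interp a n f x + s x) = (\<lambda>_. 0)"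
      by (rule SK_vanishing_on_grid[OF assms(2,1,3)])
    then show ?thesis by (simp add: fun_eq_iff)
  qed
  then show ?thesis using in_SK interp by blast
qed

end
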